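(* Let $(G,D,\star)$ be a probabilistic metric space with $\star$ continuous. Then: (1) $(Lip^1_\star(G,\Delta^+),\overline{\mathbb D},\star)$ is a complete probabilistic metric space, and $\delta:G\to Lip^1_\star(G,\Delta^+)$, $a\mapsto\delta_a$, is an isometric embedding, i.e. $\overline{\mathbb D}(\delta_a,\delta_b)=D(a,b)$; (2) if moreover $(G,\cdot,D,\star)$ is an invariant probabilistic metric group and $\star$ is also sup-continuous, then $\delta:(G,\cdot)\to(Lip^1_\star(G,\Delta^+),\odot)$ is a group homomorphism.
   Context: A distribution function is a nondecreasing, left-continuous function $F:[-\infty,+\infty]\to[0,1]$ with $F(-\infty)=0$, $F(+\infty)=1$; $\Delta^+$ is the set of distribution functions with $F(0)=0$, ordered pointwise (a complete lattice with maximum $\mathcal H_0$ and minimum $\mathcal H_\infty$, where $\mathcal H_0(t)=0$ for $t\le0$, $1$ for $t>0$, and $\mathcal H_\infty(t)=0$ for $t<+\infty$, $\mathcal H_\infty(+\infty)=1$). A triangle function is a binary operation $\star$ on $\Delta^+$ that is commutative, associative, nondecreasing in each argument, with $F\star\mathcal H_0=F$; it is sup-continuous if $\sup_i(F_i\star L)=(\sup_iF_i)\star L$ for every nonempty family $(F_i)$ and every $L$. $F_n\xrightarrow{w}F$ means $F_n(t)\to F(t)$ at every continuity point $t\in\mathbb R$ of $F$; $\star$ is continuous if $F_n\star L_n\xrightarrow{w}F\star L$ whenever $F_n\xrightarrow{w}F$, $L_n\xrightarrow{w}L$. A probabilistic metric space $(G,D,\star)$ consists of a set $G$, a triangle function $\star$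 and $D:G\times G\to\Delta^+$ with (i) $D(p,q)=\mathcal H_0$ iff $p=q$; (ii) $D(p,q)=D(q,p)$; (iii) $D(p,q)\star D(q,r)\le D(p,r)$. If $(G,\cdot)$ is a group and $D(pr,qr)=D(rp,rq)=D(p,q)$ for all $p,q,r$, it is an invariant probabilistic metric group. A sequence $(z_n)$ is Cauchy if $D(z_n,z_p)\xrightarrow{w}\mathcal H_0$ as $n,p\to\infty$; completeness means every Cauchy sequence has a point $z$ with $D(z_n,z)\xrightarrow{w}\mathcal H_0$. $Lip^1_\star(G,\Delta^+)$ is the set of maps $f:G\to\Delta^+$ with $D(x,y)\star f(y)\le f(x)$ for all $x,y$. $\delta_a(y)=D(y,a)$. $\Pi(G)$ is the set of $f\in Lip^1_\star(G,\Delta^+)$ for which there is a Cauchy sequence $(a_n)\subset G$ with $D(a_n,x)\xrightarrow{w}f(x)$ for all $x$. $\mathbb D(f,g)=\sup_{x\in G}f(x)\star g(x)$ for $f,g\in\Pi(G)$. $\overline{\mathbb D}$ on $Lip^1_\star(G,\Delta^+)$ is: $\overline{\mathbb D}(f,g)=\mathbb D(f,g)$ if $f,g\in\Pi(G)$; $\overline{\mathbb D}(f,g)=\mathcal H_0$ if $f=g$; $\overline{\mathbb D}(f,g)=\mathcal H_\infty$ if $f\ne g$ and $(f,g)\notin\Pi(G)\times\Pi(G)$. For maps $f,g:G\to\Delta^+$, $(f\odot g)(x)=\sup_{y,z\in G,\ yz=x}f(y)\star g(z)$. *)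

theory Defs
  imports Complex_Main "HOL-Library.Extended_Real" "HOL-Algebra.Group"
begin

type_synonym dfun = "ereal \<Rightarrow> real"

definition distfun :: "dfun \<Rightarrow> bool" where
  "distfun F \<longleftrightarrow> mono F \<and> (\<forall>t. 0 \<le> F t \<and> F t \<le> 1)
     \<and> (\<forall>x::real. ((\<lambda>s. F (ereal s)) \<longlongrightarrow> F (ereal x)) (at_left x))
     \<and> F (-\<infinity>) = 0 \<and> F \<infinity> = 1"

definition DeltaPlus :: "dfun set" where
  "DeltaPlus = {F. distfun F \<and> F 0 = 0}"

definition H0 :: dfun where
  "H0 t = (if t \<le> 0 then 0 else 1)"

definition Hinf :: dfun where
  "Hinf t = (if t = \<infinity> then 1 else 0)"

definition triangle_function :: "(dfun \<Rightarrow> dfun \<Rightarrow> dfun) \<Rightarrow> bool" where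
  "triangle_function tf \<longleftrightarrow>
     (\<forall>F\<in>DeltaPlus. \<forall>L\<in>DeltaPlus. tf F L \<in> DeltaPlus)
   \<and> (\<forall>F\<in>DeltaPlus. \<forall>L\<in>DeltaPlus. tf F L = tf L F)
   \<and> (\<forall>F\<in>DeltaPlus. \<forall>L\<in>DeltaPlus. \<forall>K\<in>DeltaPlus. tf (tf F L) K = tf F (tf L K))
   \<and> (\<forall>F\<in>DeltaPlus. \<forall>F'\<in>DeltaPlus. \<forall>L\<in>DeltaPlus. F \<le> F' \<longrightarrow> tf F L \<le> tf F' L \<and> tf L F \<le> tf L F')
   \<and> (\<forall>F\<in>DeltaPlus. tf F H0 = F)"

text \<open>Pointwise supremum = supremum in the lattice DeltaPlus.\<close>
definition tf_sup_continuous :: "(dfun \<Rightarrow> dfun \<Rightarrow> dfun) \<Rightarrow> bool" where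
  "tf_sup_continuous tf \<longleftrightarrow>
     (\<forall>\<F> L. \<F> \<noteq> {} \<and> \<F> \<subseteq> DeltaPlus \<and> L \<in> DeltaPlus \<longrightarrow>
        (\<lambda>t. SUP F\<in>\<F>. tf F L t) = tf (\<lambda>t. SUP F\<in>\<F>. F t) L)"

definition wconv :: "'i filter \<Rightarrow> ('i \<Rightarrow> dfun) \<Rightarrow> dfun \<Rightarrow> bool" where
  "wconv Fl S L \<longleftrightarrow> (\<forall>t::real. isCont (\<lambda>x. L (ereal x)) t \<longrightarrow>
      ((\<lambda>n. S n (ereal t)) \<longlongrightarrow> L (ereal t)) Fl)"

definition tf_continuous :: "(dfun \<Rightarrow> dfun \<Rightarrow> dfun) \<Rightarrow> bool" where
  "tf_continuous tf \<longleftrightarrow>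
     (\<forall>Fs Ls F L. (\<forall>n. Fs n \<in> DeltaPlus) \<and> (\<forall>n. Ls n \<in> DeltaPlus) \<and> F \<in> DeltaPlus \<and> L \<in> DeltaPlus
        \<and> wconv sequentially Fs F \<and> wconv sequentially Ls L
        \<longrightarrow> wconv sequentially (\<lambda>n. tf (Fs n) (Ls n)) (tf F L))"

definition pm_space :: "'a set \<Rightarrow> ('a \<Rightarrow> 'a \<Rightarrow> dfun) \<Rightarrow> (dfun \<Rightarrow> dfun \<Rightarrow> dfun) \<Rightarrow> bool" where
  "pm_space S D tf \<longleftrightarrow> triangle_function tf
     \<and> (\<forall>p\<in>S. \<forall>q\<in>S. D p q \<in> DeltaPlus)
     \<and> (\<forall>p\<in>S. \<forall>q\<in>S. D p q = H0 \<longleftrightarrow> p = q)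
     \<and> (\<forall>p\<in>S. \<forall>q\<in>S. D p q = D q p)
     \<and> (\<forall>p\<in>S. \<forall>q\<in>S. \<forall>r\<in>S. tf (D p q) (D q r) \<le> D p r)"

definition pm_cauchy :: "'a set \<Rightarrow> ('a \<Rightarrow> 'a \<Rightarrow> dfun) \<Rightarrow> (nat \<Rightarrow> 'a) \<Rightarrow> bool" where
  "pm_cauchy S D z \<longleftrightarrow> (\<forall>n. z n \<in> S)
     \<and> wconv (sequentially \<times>\<^sub>F sequentially) (\<lambda>(n, p). D (z n) (z p)) H0"

definition pm_complete :: "'a set \<Rightarrow> ('a \<Rightarrow> 'a \<Rightarrow> dfun) \<Rightarrow> bool" where
  "pm_complete S D \<longleftrightarrow> (\<forall>z. pm_cauchy S D z \<longrightarrow>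
      (\<exists>x\<in>S. wconv sequentially (\<lambda>n. D (z n) x) H0))"

definition LipS :: "('a \<Rightarrow> 'a \<Rightarrow> dfun) \<Rightarrow> (dfun \<Rightarrow> dfun \<Rightarrow> dfun) \<Rightarrow> ('a \<Rightarrow> dfun) set" where
  "LipS D tf = {f. (\<forall>x. f x \<in> DeltaPlus) \<and> (\<forall>x y. tf (D x y) (f y) \<le> f x)}"

definition pm_delta :: "('a \<Rightarrow> 'a \<Rightarrow> dfun) \<Rightarrow> 'a \<Rightarrow> ('a \<Rightarrow> dfun)" where
  "pm_delta D a = (\<lambda>y. D y a)"

definition PiG :: "('a \<Rightarrow> 'a \<Rightarrow> dfun) \<Rightarrow> (dfun \<Rightarrow> dfun \<Rightarrow> dfun) \<Rightarrow> ('a \<Rightarrow> dfun) set" where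
  "PiG D tf = {f \<in> LipS D tf. \<exists>a. pm_cauchy UNIV D a \<and>
                 (\<forall>x. wconv sequentially (\<lambda>n. D (a n) x) (f x))}"

definition DD :: "(dfun \<Rightarrow> dfun \<Rightarrow> dfun) \<Rightarrow> ('a \<Rightarrow> dfun) \<Rightarrow> ('a \<Rightarrow> dfun) \<Rightarrow> dfun" where
  "DD tf f g = (\<lambda>t. SUP x. tf (f x) (g x) t)"

definition DDbar :: "('a \<Rightarrow> 'a \<Rightarrow> dfun) \<Rightarrow> (dfun \<Rightarrow> dfun \<Rightarrow> dfun) \<Rightarrow> ('a \<Rightarrow> dfun) \<Rightarrow> ('a \<Rightarrow> dfun) \<Rightarrow> dfun" where
  "DDbar D tf f g = (if f \<in> PiG D tf \<and> g \<in> PiG D tf then DD tf f g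
                     else if f = g then H0 else Hinf)"

definition invariant_pm_group :: "('a, 'b) monoid_scheme \<Rightarrow> ('a \<Rightarrow> 'a \<Rightarrow> dfun) \<Rightarrow> bool" where
  "invariant_pm_group Gr D \<longleftrightarrow> (\<forall>p q r. D (p \<otimes>\<^bsub>Gr\<^esub> r) (q \<otimes>\<^bsub>Gr\<^esub> r) = D p q
                                   \<and> D (r \<otimes>\<^bsub>Gr\<^esub> p) (r \<otimes>\<^bsub>Gr\<^esub> q) = D p q)"

definition odot :: "('a, 'b) monoid_scheme \<Rightarrow> (dfun \<Rightarrow> dfun \<Rightarrow> dfun) \<Rightarrow> ('a \<Rightarrow> dfun) \<Rightarrow> ('a \<Rightarrow> dfun) \<Rightarrow> ('a \<Rightarrow> dfun)" where
  "odot Gr tf f g = (\<lambda>x t. SUP yz\<in>{(y, z). y \<otimes>\<^bsub>Gr\<^esub> z = x}. tf (f (fst yz)) (g (snd yz)) t)"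

end

theory Submission
  imports Defs "HOL-Probability.Helly_Selection"
begin

text \<open>
  If \<open>g\<close> is the pointwise weak limit of \<open>D (a n)\<close> along a Cauchy sequence
  \<open>a\<close>, Helly's selection theorem and the continuity of \<open>tf\<close> show that \<open>DD tf f g\<close> is the weak limit
  of \<open>f (a n)\<close> along every subsequence along which the latter converges. This yields
  \<open>DD tf g g = H0\<close>, separation of points and the triangle inequality on \<open>PiG\<close>; off \<open>PiG\<close> the
  distance is discrete. For completeness, given a Cauchy sequence \<open>f n\<close> in \<open>PiG\<close>, choose points
  \<open>b n\<close> at which \<open>f n\<close> is close to \<open>H0\<close>; the triangle inequality through \<open>pm_delta D (b n)\<close>
  makes \<open>b\<close> Cauchy in \<open>G\<close>, and its pointwise weak limit is the limit of the \<open>f n\<close>.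
  For an invariant metric, \<open>tf (D y a) (D z b) \<le> D (y z) (a b)\<close> with equality at \<open>y = x b\<inverse>\<close>,
  \<open>z = b\<close>, so the supremum defining \<open>odot\<close> is attained and \<open>pm_delta\<close> is multiplicative.
\<close>

section \<open>Distribution functions\<close>

lemma DeltaPlusI:
  assumes "mono F" "\<And>t. 0 \<le> F t" "\<And>t. F t \<le> 1"
    "\<And>x::real. ((\<lambda>s. F (ereal s)) \<longlongrightarrow> F (ereal x)) (at_left x)"
    "F (-\<infinity>) = 0" "F \<infinity> = 1" "F 0 = 0"
  shows "F \<in> DeltaPlus"
  using assms by (simp add: DeltaPlus_def distfun_def)

context
  fixes F :: dfun
  assumes F: "F \<in> DeltaPlus"
begin

lemma DeltaPlus_monoD: "s \<le> t \<Longrightarrow> F s \<le> F t"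
  using F by (simp add: DeltaPlus_def distfun_def monoD)

lemma DeltaPlus_nonneg: "0 \<le> F t"
  using F by (simp add: DeltaPlus_def distfun_def)

lemma DeltaPlus_le_one: "F t \<le> 1"
  using F by (simp add: DeltaPlus_def distfun_def)

lemma DeltaPlus_PInf: "F \<infinity> = 1"
  using F by (simp add: DeltaPlus_def distfun_def)

lemma DeltaPlus_MInf: "F (-\<infinity>) = 0"
  using F by (simp add: DeltaPlus_def distfun_def)

lemma DeltaPlus_left_continuous: "((\<lambda>s. F (ereal s)) \<longlongrightarrow> F (ereal x)) (at_left x)"
  using F by (simp add: DeltaPlus_def distfun_def)

lemma DeltaPlus_nonpos: "t \<le> 0 \<Longrightarrow> F t = 0"
  using DeltaPlus_monoD[of t 0] DeltaPlus_nonneg[of t] F by (simp add: DeltaPlus_def)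

lemma mono_DeltaPlus_real: "mono (\<lambda>x. F (ereal x))"
  by (auto simp: mono_def intro: DeltaPlus_monoD)

end

lemma H0_DeltaPlus: "H0 \<in> DeltaPlus"
proof (rule DeltaPlusI)
  fix x :: real
  have "eventually (\<lambda>s. H0 (ereal s) = H0 (ereal x)) (at_left x)"
  proof (cases "x \<le> 0")
    case True
    then show ?thesis by (auto simp: H0_def eventually_at_left_field intro!: exI[of _ "x - 1"])
  next
    case False
    then show ?thesis by (auto simp: H0_def eventually_at_left_field intro!: exI[of _ 0])
  qed
  then show "((\<lambda>s. H0 (ereal s)) \<longlongrightarrow> H0 (ereal x)) (at_left x)"
    by (rule tendsto_eventually)
qed (auto simp: H0_def mono_def)

lemma Hinf_DeltaPlus: "Hinf \<in> DeltaPlus"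
  by (rule DeltaPlusI) (auto simp: mono_def Hinf_def)

lemma DeltaPlus_le_H0: "F \<in> DeltaPlus \<Longrightarrow> F \<le> H0"
  by (auto simp: le_fun_def H0_def DeltaPlus_nonpos DeltaPlus_le_one)

lemma Hinf_le_DeltaPlus: "F \<in> DeltaPlus \<Longrightarrow> Hinf \<le> F"
  by (auto simp: le_fun_def Hinf_def DeltaPlus_PInf DeltaPlus_nonneg)

lemma H0_neq_Hinf: "H0 \<noteq> Hinf"
  by (auto simp: fun_eq_iff H0_def Hinf_def intro!: exI[of _ 1])

lemma tendsto_at_left_SUP:
  fixes h :: "'i \<Rightarrow> real \<Rightarrow> real"
  assumes I: "I \<noteq> {}" and bdd: "\<And>t. bdd_above ((\<lambda>i. h i t) ` I)"
    and mono: "\<And>i. i \<in> I \<Longrightarrow> mono (h i)"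
    and cont: "\<And>i. i \<in> I \<Longrightarrow> (h i \<longlongrightarrow> h i x) (at_left x)"
  shows "((\<lambda>s. SUP i\<in>I. h i s) \<longlongrightarrow> (SUP i\<in>I. h i x)) (at_left x)"
proof (rule order_tendstoI)
  fix a assume "a < (SUP i\<in>I. h i x)"
  then obtain i where i: "i \<in> I" "a < h i x"
    using less_cSUP_iff[OF I bdd] by blast
  have "eventually (\<lambda>s. a < h i s) (at_left x)"
    by (rule order_tendstoD(1)[OF cont[OF i(1)] i(2)])
  then show "eventually (\<lambda>s. a < (SUP i\<in>I. h i s)) (at_left x)"
    by eventually_elim (rule less_le_trans[OF _ cSUP_upper[OF i(1) bdd]])
next
  fix a assume a: "(SUP i\<in>I. h i x) < a"
  have "(SUP i\<in>I. h i s) \<le> (SUP i\<in>I. h i x)" if "s < x" for s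
    using that by (intro cSUP_mono[OF I bdd]) (meson less_imp_le monoD mono)
  then show "eventually (\<lambda>s. (SUP i\<in>I. h i s) < a) (at_left x)"
    using a by (auto simp: eventually_at_left_field intro!: exI[of _ "x - 1"] intro: le_less_trans)
qed

lemma SUP_DeltaPlus:
  assumes I: "I \<noteq> {}" and h: "\<And>i. i \<in> I \<Longrightarrow> h i \<in> DeltaPlus"
  shows "(\<lambda>t. SUP i\<in>I. h i t) \<in> DeltaPlus"
proof (rule DeltaPlusI)
  have bdd: "bdd_above ((\<lambda>i. h i t) ` I)" for t
    using h DeltaPlus_le_one by (auto intro!: bdd_aboveI[of _ 1])
  have const: "(SUP i\<in>I. h i t) = c" if "\<And>i. i \<in> I \<Longrightarrow> h i t = c" for t c
    using that I by simp
  obtain i0 where i0: "i0 \<in> I" using I by blast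
  show "mono (\<lambda>t. SUP i\<in>I. h i t)"
  proof (rule monoI)
    fix s t :: ereal assume "s \<le> t"
    then show "(SUP i\<in>I. h i s) \<le> (SUP i\<in>I. h i t)"
      by (intro cSUP_mono[OF I bdd]) (blast intro: DeltaPlus_monoD h)
  qed
  show "0 \<le> (SUP i\<in>I. h i t)" for t
    using cSUP_upper[OF i0 bdd, of t] DeltaPlus_nonneg[OF h[OF i0], of t] by linarith
  show "(SUP i\<in>I. h i t) \<le> 1" for t
    using I h DeltaPlus_le_one by (intro cSUP_least) auto
  show "(SUP i\<in>I. h i (-\<infinity>)) = 0" by (rule const) (simp add: h DeltaPlus_MInf)
  show "(SUP i\<in>I. h i \<infinity>) = 1" by (rule const) (simp add: h DeltaPlus_PInf)
  show "(SUP i\<in>I. h i 0) = 0" by (rule const) (simp add: h DeltaPlus_nonpos)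
  show "((\<lambda>s. SUP i\<in>I. h i (ereal s)) \<longlongrightarrow> (SUP i\<in>I. h i (ereal x))) (at_left x)" for x
    using I bdd h by (intro tendsto_at_left_SUP) (auto intro: mono_DeltaPlus_real DeltaPlus_left_continuous)
qed

section \<open>Weak convergence\<close>

lemma exists_common_continuity_point:
  fixes \<phi> \<psi> :: "real \<Rightarrow> real"
  assumes "mono \<phi>" "mono \<psi>" "s < t"
  shows "\<exists>u. s < u \<and> u < t \<and> isCont \<phi> u \<and> isCont \<psi> u"
proof -
  have "countable ({a. \<not> isCont \<phi> a} \<union> {a. \<not> isCont \<psi> a})"
    using mono_ctble_discont[OF assms(1)] mono_ctble_discont[OF assms(2)] by simp
  from open_minus_countable[OF this, of "{s<..<t}"] assms(3)
  show ?thesis by auto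
qed

lemma LIMSEQ_by_subsubsequences:
  fixes X :: "nat \<Rightarrow> 'a::metric_space"
  assumes "\<And>r::nat \<Rightarrow> nat. strict_mono r \<Longrightarrow> \<exists>r'::nat \<Rightarrow> nat. strict_mono r' \<and> (\<lambda>i. X (r (r' i))) \<longlonglongrightarrow> L"
  shows "X \<longlonglongrightarrow> L"
proof (rule ccontr)
  assume "\<not> X \<longlonglongrightarrow> L"
  then obtain e where e: "e > 0" and "\<not> eventually (\<lambda>n. dist (X n) L < e) sequentially"
    unfolding tendsto_iff by blast
  then have "infinite {n. \<not> dist (X n) L < e}"
    by (simp add: cofinite_eq_sequentially[symmetric] eventually_cofinite)
  from infinite_enumerate[OF this] obtain r :: "nat \<Rightarrow> nat" where r: "strict_mono r" "\<forall>n. \<not> dist (X (r n)) L < e"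
    by blast
  obtain r' where "(\<lambda>i. X (r (r' i))) \<longlonglongrightarrow> L"
    using assms[OF r(1)] by blast
  from tendstoD[OF this e] obtain N where "dist (X (r (r' N))) L < e"
    unfolding eventually_sequentially by blast
  with r(2) show False by blast
qed

lemma wconv_const: "wconv Fl (\<lambda>n. F) F"
  by (simp add: wconv_def)

lemma wconv_compose: "wconv F2 S L \<Longrightarrow> filterlim r F2 F1 \<Longrightarrow> wconv F1 (\<lambda>i. S (r i)) L"
  unfolding wconv_def using filterlim_compose by blast

lemma wconv_cong: "eventually (\<lambda>n. S n = S' n) Fl \<Longrightarrow> wconv Fl S L \<longleftrightarrow> wconv Fl S' L"
  unfolding wconv_def by (intro all_cong imp_cong refl tendsto_cong) (auto elim: eventually_mono)

lemma wconv_by_subsubsequences: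
  assumes "\<And>r::nat \<Rightarrow> nat. strict_mono r \<Longrightarrow>
      \<exists>r'::nat \<Rightarrow> nat. strict_mono r' \<and> wconv sequentially (\<lambda>i. S (r (r' i))) L"
  shows "wconv sequentially S L"
  unfolding wconv_def
proof (intro allI impI LIMSEQ_by_subsubsequences)
  fix t :: real and r :: "nat \<Rightarrow> nat"
  assume "isCont (\<lambda>x. L (ereal x)) t" "strict_mono r"
  then show "\<exists>r'. strict_mono r' \<and> (\<lambda>i. S (r (r' i)) (ereal t)) \<longlonglongrightarrow> L (ereal t)"
    using assms[OF \<open>strict_mono r\<close>] unfolding wconv_def by blast
qed

lemma wconv_le:
  assumes FS: "wconv sequentially Fs F" and GS: "wconv sequentially Gs G"
    and F: "F \<in> DeltaPlus" and G: "G \<in> DeltaPlus"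
    and le: "eventually (\<lambda>n. Fs n \<le> Gs n) sequentially"
  shows "F \<le> G"
proof (rule le_funI)
  fix t :: ereal
  show "F t \<le> G t"
  proof (cases t)
    case (real r)
    have below: "F (ereal s) \<le> G (ereal r)" if sr: "s < r" for s
    proof -
      obtain u where u: "s < u" "u < r" "isCont (\<lambda>x. F (ereal x)) u" "isCont (\<lambda>x. G (ereal x)) u"
        using exists_common_continuity_point[OF mono_DeltaPlus_real[OF F] mono_DeltaPlus_real[OF G] sr]
        by blast
      have "F (ereal u) \<le> G (ereal u)"
      proof (rule tendsto_le[OF trivial_limit_sequentially])
        show "((\<lambda>n. Gs n (ereal u)) \<longlongrightarrow> G (ereal u)) sequentially"
          using GS u by (simp add: wconv_def)
        show "((\<lambda>n. Fs n (ereal u)) \<longlongrightarrow> F (ereal u)) sequentially"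
          using FS u by (simp add: wconv_def)
        show "eventually (\<lambda>n. Fs n (ereal u) \<le> Gs n (ereal u)) sequentially"
          using le by eventually_elim (simp add: le_fun_def)
      qed
      moreover have "F (ereal s) \<le> F (ereal u)" "G (ereal u) \<le> G (ereal r)"
        using F G u by (auto intro: DeltaPlus_monoD)
      ultimately show ?thesis by linarith
    qed
    have "F (ereal r) \<le> G (ereal r)"
    proof (rule tendsto_upperbound[OF DeltaPlus_left_continuous[OF F] _ trivial_limit_at_left_real])
      show "eventually (\<lambda>s. F (ereal s) \<le> G (ereal r)) (at_left r)"
        using below by (auto simp: eventually_at_left_field intro!: exI[of _ "r - 1"])
    qed
    then show ?thesis using real by simp
  qed (simp_all add: F G DeltaPlus_PInf DeltaPlus_MInf)
qed

lemma wconv_lower_bound: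
  assumes FS: "wconv sequentially Fs F" and F: "F \<in> DeltaPlus" and Fs: "\<And>n. Fs n \<in> DeltaPlus"
    and ev: "eventually (\<lambda>n. c \<le> Fs n (ereal s)) sequentially" and "s < t"
  shows "c \<le> F (ereal t)"
proof -
  obtain u where u: "s < u" "u < t" "isCont (\<lambda>x. F (ereal x)) u"
    using exists_common_continuity_point[OF mono_DeltaPlus_real[OF F] mono_DeltaPlus_real[OF F] \<open>s < t\<close>]
    by blast
  have "c \<le> F (ereal u)"
  proof (rule tendsto_lowerbound[OF _ _ trivial_limit_sequentially])
    show "((\<lambda>n. Fs n (ereal u)) \<longlongrightarrow> F (ereal u)) sequentially"
      using FS u by (simp add: wconv_def)
    have mono: "Fs n (ereal s) \<le> Fs n (ereal u)" for n
      using u(1) by (intro DeltaPlus_monoD[OF Fs]) simp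
    from ev show "eventually (\<lambda>n. c \<le> Fs n (ereal u)) sequentially"
      by eventually_elim (rule order_trans[OF _ mono])
  qed
  also have "\<dots> \<le> F (ereal t)" using F u by (auto intro: DeltaPlus_monoD)
  finally show ?thesis .
qed

lemma wconv_H0_iff:
  assumes Fs: "\<And>n. Fs n \<in> DeltaPlus"
  shows "wconv Fl Fs H0 \<longleftrightarrow> (\<forall>t>0. \<forall>a<1. eventually (\<lambda>n. a < Fs n (ereal t)) Fl)"
proof -
  have to_one: "((\<lambda>n. Fs n (ereal t)) \<longlongrightarrow> 1) Fl \<longleftrightarrow> (\<forall>a<1. eventually (\<lambda>n. a < Fs n (ereal t)) Fl)" for t
    using DeltaPlus_le_one[OF Fs]
    by (auto simp: order_tendsto_iff intro: always_eventually le_less_trans)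
  have cont_H0: "isCont (\<lambda>x. H0 (ereal x)) t" if "t > 0" for t
  proof -
    have "eventually (\<lambda>x. H0 (ereal x) = 1) (nhds t)"
      using eventually_nhds_in_open[of "{0<..}" t] that by (auto elim!: eventually_mono simp: H0_def)
    then show ?thesis using isCont_cong by fastforce
  qed
  show ?thesis
    unfolding wconv_def
  proof (intro iffI allI impI)
    fix t :: real
    assume "\<forall>t. isCont (\<lambda>x. H0 (ereal x)) t \<longrightarrow> ((\<lambda>n. Fs n (ereal t)) \<longlongrightarrow> H0 (ereal t)) Fl"
      and "t > 0"
    with cont_H0 have "((\<lambda>n. Fs n (ereal t)) \<longlongrightarrow> H0 (ereal t)) Fl" by blast
    with \<open>t > 0\<close> to_one show "a < 1 \<Longrightarrow> eventually (\<lambda>n. a < Fs n (ereal t)) Fl" for a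
      by (simp add: H0_def)
  next
    fix t :: real
    assume "\<forall>t>0. \<forall>a<1. eventually (\<lambda>n. a < Fs n (ereal t)) Fl"
      and "isCont (\<lambda>x. H0 (ereal x)) t"
    with to_one show "((\<lambda>n. Fs n (ereal t)) \<longlongrightarrow> H0 (ereal t)) Fl"
      by (cases "t \<le> 0") (auto simp: H0_def DeltaPlus_nonpos[OF Fs])
  qed
qed

lemma wconv_H0_squeeze:
  assumes "wconv Fl Ls H0" and "\<And>n. Ls n \<le> Fs n"
    and Ls: "\<And>n. Ls n \<in> DeltaPlus" and Fs: "\<And>n. Fs n \<in> DeltaPlus"
  shows "wconv Fl Fs H0"
  using assms(1,2) unfolding wconv_H0_iff[OF Ls] wconv_H0_iff[OF Fs]
  by (fastforce elim: eventually_mono intro: less_le_trans simp: le_fun_def)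

lemma wconv_H0_diagonal:
  assumes E: "\<And>n. E n \<in> DeltaPlus" and eps: "\<epsilon> \<longlonglongrightarrow> 0"
    and bound: "\<And>n. 1 - \<epsilon> n < E n (ereal (\<epsilon> n))"
  shows "wconv sequentially E H0"
  unfolding wconv_H0_iff[OF E]
proof (intro allI impI)
  fix t a :: real assume "t > 0" "a < 1"
  then have "eventually (\<lambda>n. \<epsilon> n < min t (1 - a)) sequentially"
    using order_tendstoD(2)[OF eps, of "min t (1 - a)"] by simp
  then show "eventually (\<lambda>n. a < E n (ereal t)) sequentially"
  proof eventually_elim
    case (elim n)
    then have "E n (ereal (\<epsilon> n)) \<le> E n (ereal t)" by (intro DeltaPlus_monoD[OF E]) simp
    with bound[of n] elim show ?case by linarith
  qed
qed

text \<open>Since \<open>tf_continuous\<close> only speaks about sequences, convergence along the product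
  filter is reduced to convergence along pairs of sequences tending to infinity.\<close>

lemma wconv_prod_sequentially_H0:
  fixes S :: "nat \<times> nat \<Rightarrow> dfun"
  assumes S: "\<And>x. S x \<in> DeltaPlus"
    and seq: "\<And>p q. filterlim p sequentially sequentially \<Longrightarrow> filterlim q sequentially sequentially \<Longrightarrow>
      wconv sequentially (\<lambda>i. S (p i, q i)) H0"
  shows "wconv (sequentially \<times>\<^sub>F sequentially) S H0"
  unfolding wconv_H0_iff[OF S]
proof (intro allI impI)
  fix t a :: real assume t: "t > 0" and a: "a < 1"
  show "eventually (\<lambda>x. a < S x (ereal t)) (sequentially \<times>\<^sub>F sequentially)"
  proof (rule ccontr)
    assume "\<not> ?thesis"
    then have "\<forall>N. \<exists>m n. N \<le> m \<and> N \<le> n \<and> \<not> a < S (n, m) (ereal t)"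
      unfolding eventually_prod_sequentially by blast
    then obtain p q where pq: "\<And>N. N \<le> q N" "\<And>N. N \<le> p N" "\<And>N. \<not> a < S (p N, q N) (ereal t)"
      by metis
    have "filterlim p sequentially sequentially" "filterlim q sequentially sequentially"
      using pq(1,2) by (auto intro: filterlim_at_top_mono[OF filterlim_ident])
    from seq[OF this] have "eventually (\<lambda>i. a < S (p i, q i) (ereal t)) sequentially"
      using wconv_H0_iff[of "\<lambda>i. S (p i, q i)"] S t a by blast
    with pq(3) show False
      by (simp add: eventually_sequentially)
  qed
qed

lemma wconv_prod_H0_iff:
  assumes "\<And>n p. S n p \<in> DeltaPlus"
  shows "wconv (sequentially \<times>\<^sub>F sequentially) (\<lambda>(n, p). S n p) H0 \<longleftrightarrow>
    (\<forall>t>0. \<forall>a<1. \<exists>N. \<forall>m\<ge>N. \<forall>n\<ge>N. a < S n m (ereal t))"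
proof -
  have "\<And>x. (\<lambda>(n, p). S n p) x \<in> DeltaPlus"
    using assms by (simp add: case_prod_beta)
  from wconv_H0_iff[of "\<lambda>(n, p). S n p", OF this] show ?thesis
    by (simp add: case_prod_beta eventually_prod_sequentially)
qed

section \<open>Helly selection in \<open>DeltaPlus\<close>\<close>

text \<open>The library's theorem \<open>Helly_selection\<close> is about right-continuous functions on the reals;
  the reflection \<open>x \<mapsto> 1 - F (-x)\<close> converts a left-continuous distribution function into one.\<close>

lemma DeltaPlus_reflection:
  assumes F: "F \<in> DeltaPlus"
  shows "mono (\<lambda>x. 1 - F (ereal (-x)))" and "continuous (at_right x) (\<lambda>x. 1 - F (ereal (-x)))"
    and "\<bar>1 - F (ereal (-x))\<bar> \<le> 1"
proof -
  show "mono (\<lambda>x. 1 - F (ereal (-x)))"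
    by (auto intro!: monoI DeltaPlus_monoD[OF F])
  have "((\<lambda>s. F (ereal s)) \<longlongrightarrow> F (ereal (-x))) (filtermap uminus (at_right x))"
    using DeltaPlus_left_continuous[OF F, of "-x"] at_left_minus[of "-x"] by simp
  then have "((\<lambda>y. 1 - F (ereal (-y))) \<longlongrightarrow> 1 - F (ereal (-x))) (at_right x)"
    by (intro tendsto_intros) (simp add: filterlim_filtermap)
  then show "continuous (at_right x) (\<lambda>x. 1 - F (ereal (-x)))"
    by (simp add: continuous_within)
  show "\<bar>1 - F (ereal (-x))\<bar> \<le> 1"
    using DeltaPlus_nonneg[OF F] DeltaPlus_le_one[OF F] by (simp add: abs_le_iff)
qed

lemma DeltaPlus_unreflection:
  fixes G :: "real \<Rightarrow> real"
  assumes mono: "mono G" and rc: "\<And>x. continuous (at_right x) G"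
    and G: "\<And>x. 0 \<le> G x" "\<And>x. G x \<le> 1" "\<And>x. 0 \<le> x \<Longrightarrow> G x = 1"
  shows "(\<lambda>e. case e of ereal t \<Rightarrow> 1 - G (-t) | PInfty \<Rightarrow> 1 | MInfty \<Rightarrow> 0) \<in> DeltaPlus"
proof (rule DeltaPlusI)
  show "mono (\<lambda>e. case e of ereal t \<Rightarrow> 1 - G (-t) | PInfty \<Rightarrow> 1 | MInfty \<Rightarrow> 0)"
  proof (rule monoI)
    fix a b :: ereal assume "a \<le> b"
    then show "(case a of ereal t \<Rightarrow> 1 - G (-t) | PInfty \<Rightarrow> 1 | MInfty \<Rightarrow> 0)
      \<le> (case b of ereal t \<Rightarrow> 1 - G (-t) | PInfty \<Rightarrow> 1 | MInfty \<Rightarrow> 0)"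
      using G by (cases a; cases b) (auto intro: monoD[OF mono])
  qed
  fix x :: real
  have "(G \<longlongrightarrow> G (-x)) (at_right (-x))"
    using rc[of "-x"] by (simp add: continuous_within)
  then have "(G \<longlongrightarrow> G (-x)) (filtermap uminus (at_left x))"
    using at_right_minus[of "-x"] by simp
  then have "((\<lambda>y. 1 - G (-y)) \<longlongrightarrow> 1 - G (-x)) (at_left x)"
    by (intro tendsto_intros) (simp add: filterlim_filtermap)
  then show "((\<lambda>s. case ereal s of ereal t \<Rightarrow> 1 - G (-t) | PInfty \<Rightarrow> 1 | MInfty \<Rightarrow> 0)
      \<longlongrightarrow> (case ereal x of ereal t \<Rightarrow> 1 - G (-t) | PInfty \<Rightarrow> 1 | MInfty \<Rightarrow> 0)) (at_left x)"
    by simp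
qed (auto simp: G zero_ereal_def split: ereal.split)

lemma Helly_limit_bounds:
  fixes G :: "real \<Rightarrow> real" and f :: "nat \<Rightarrow> real \<Rightarrow> real"
  assumes mono: "mono G" and rc: "\<And>x. continuous (at_right x) G" and le1: "\<And>x. G x \<le> 1"
    and lim: "\<And>x. isCont G x \<Longrightarrow> (\<lambda>n. f n x) \<longlonglongrightarrow> G x"
    and f: "\<And>n x. 0 \<le> f n x" "\<And>n x. 0 \<le> x \<Longrightarrow> f n x = 1"
  shows "0 \<le> G x" and "0 \<le> x \<Longrightarrow> G x = 1"
proof -
  obtain y where y: "x - 1 < y" "y < x" "isCont G y"
    using exists_common_continuity_point[OF mono mono, of "x - 1" x] by auto
  have "0 \<le> G y"
    by (rule tendsto_lowerbound[OF lim[OF y(3)]]) (simp_all add: f)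
  then show "0 \<le> G x"
    using monoD[OF mono, of y x] y by simp
  have pos: "G z = 1" if z: "0 < z" for z
  proof -
    obtain y where y: "0 < y" "y < z" "isCont G y"
      using exists_common_continuity_point[OF mono mono z] by auto
    have "(\<lambda>n. f n y) \<longlonglongrightarrow> 1"
      using f(2) y(1) by simp
    then have "G y = 1"
      using LIMSEQ_unique[OF lim[OF y(3)]] by simp
    then show ?thesis
      using monoD[OF mono, of y z] y le1[of z] by simp
  qed
  assume "0 \<le> x"
  have "(G \<longlongrightarrow> G x) (at_right x)"
    using rc[of x] by (simp add: continuous_within)
  moreover have "(G \<longlongrightarrow> 1) (at_right x)"
    using \<open>0 \<le> x\<close> by (intro tendsto_eventually)
      (auto simp: eventually_at_right_field intro!: exI[of _ "x + 1"] pos)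
  ultimately show "G x = 1"
    using tendsto_unique[OF trivial_limit_at_right_real] by blast
qed

lemma Helly_selection_DeltaPlus:
  assumes Fs: "\<And>n. Fs n \<in> DeltaPlus"
  shows "\<exists>(r::nat \<Rightarrow> nat) L. strict_mono r \<and> L \<in> DeltaPlus \<and> wconv sequentially (\<lambda>i. Fs (r i)) L"
proof -
  define f where "f n x = 1 - Fs n (ereal (-x))" for n x
  have "\<exists>r. strict_mono (r :: nat \<Rightarrow> nat) \<and> (\<exists>G. (\<forall>x. continuous (at_right x) G) \<and> mono G
      \<and> (\<forall>x. \<bar>G x\<bar> \<le> 1) \<and> (\<forall>x. isCont G x \<longrightarrow> (\<lambda>n. f (r n) x) \<longlonglongrightarrow> G x))"
    by (rule Helly_selection) (simp_all add: f_def DeltaPlus_reflection[OF Fs])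
  then obtain r G where r: "strict_mono r" and rc: "\<And>x. continuous (at_right x) G" and mono: "mono G"
    and bnd: "\<And>x. \<bar>G x\<bar> \<le> 1" and lim: "\<And>x. isCont G x \<Longrightarrow> (\<lambda>n. f (r n) x) \<longlonglongrightarrow> G x"
    by blast
  have f: "0 \<le> f (r n) x" "0 \<le> x \<Longrightarrow> f (r n) x = 1" for n x
    using DeltaPlus_le_one[OF Fs] DeltaPlus_nonpos[OF Fs[of "r n"], of "ereal (-x)"]
    by (auto simp: f_def)
  have G: "0 \<le> G x" "G x \<le> 1" "0 \<le> x \<Longrightarrow> G x = 1" for x
    using Helly_limit_bounds[OF mono rc _ lim f] bnd by (auto simp: abs_le_iff)
  define L :: dfun where "L e = (case e of ereal t \<Rightarrow> 1 - G (-t) | PInfty \<Rightarrow> 1 | MInfty \<Rightarrow> 0)" for e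
  have "L \<in> DeltaPlus"
    unfolding L_def by (rule DeltaPlus_unreflection[OF mono rc G])
  moreover have "wconv sequentially (\<lambda>i. Fs (r i)) L"
    unfolding wconv_def
  proof (intro allI impI)
    fix t :: real assume t: "isCont (\<lambda>x. L (ereal x)) t"
    have "isCont uminus (-t)"
      by simp
    from isCont_o2[OF this] t have "isCont (\<lambda>y. L (ereal (- y))) (-t)"
      by simp
    from continuous_diff[OF continuous_const[of _ 1] this] have "isCont G (-t)"
      by (simp add: L_def)
    from tendsto_diff[OF tendsto_const[of 1] lim[OF this]]
    show "(\<lambda>n. Fs (r n) (ereal t)) \<longlonglongrightarrow> L (ereal t)"
      by (simp add: f_def L_def)
  qed
  ultimately show ?thesis
    using r by blast
qed

section \<open>The distance on Lipschitz maps\<close>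

locale triangle_fun =
  fixes tf :: "dfun \<Rightarrow> dfun \<Rightarrow> dfun"
  assumes triangle_function: "triangle_function tf"
begin

lemma tf_DeltaPlus: "F \<in> DeltaPlus \<Longrightarrow> L \<in> DeltaPlus \<Longrightarrow> tf F L \<in> DeltaPlus"
  using triangle_function unfolding triangle_function_def by blast

lemma tf_commute: "F \<in> DeltaPlus \<Longrightarrow> L \<in> DeltaPlus \<Longrightarrow> tf F L = tf L F"
  using triangle_function unfolding triangle_function_def by blast

lemma tf_mono_right:
  "F \<in> DeltaPlus \<Longrightarrow> F' \<in> DeltaPlus \<Longrightarrow> L \<in> DeltaPlus \<Longrightarrow> F \<le> F' \<Longrightarrow> tf L F \<le> tf L F'"
  using triangle_function unfolding triangle_function_def by blast

lemma tf_H0_right: "F \<in> DeltaPlus \<Longrightarrow> tf F H0 = F"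
  using triangle_function unfolding triangle_function_def by blast

lemma tf_H0_left: "F \<in> DeltaPlus \<Longrightarrow> tf H0 F = F"
  by (simp add: tf_commute[OF H0_DeltaPlus] tf_H0_right)

lemma tf_le_left:
  assumes "F \<in> DeltaPlus" "L \<in> DeltaPlus"
  shows "tf F L \<le> F"
  using tf_mono_right[OF assms(2) H0_DeltaPlus assms(1) DeltaPlus_le_H0[OF assms(2)]]
  by (simp add: tf_H0_right assms(1))

lemma tf_Hinf_left: "F \<in> DeltaPlus \<Longrightarrow> tf Hinf F = Hinf"
  using tf_le_left[OF Hinf_DeltaPlus] Hinf_le_DeltaPlus[OF tf_DeltaPlus[OF Hinf_DeltaPlus]]
  by (blast intro: antisym)

lemma tf_Hinf_right: "F \<in> DeltaPlus \<Longrightarrow> tf F Hinf = Hinf"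
  by (simp add: tf_commute[OF _ Hinf_DeltaPlus] tf_Hinf_left)

context
  fixes f g :: "'a \<Rightarrow> dfun"
  assumes f: "\<And>x. f x \<in> DeltaPlus" and g: "\<And>x. g x \<in> DeltaPlus"
begin

lemma DD_DeltaPlus: "DD tf f g \<in> DeltaPlus"
  unfolding DD_def by (rule SUP_DeltaPlus) (auto intro: tf_DeltaPlus f g)

lemma DD_commute: "DD tf f g = DD tf g f"
  unfolding DD_def by (simp add: tf_commute[OF f g])

lemma DD_upper: "tf (f x) (g x) \<le> DD tf f g"
proof (rule le_funI)
  fix t
  have "bdd_above ((\<lambda>x. tf (f x) (g x) t) ` UNIV)"
    using DeltaPlus_le_one[OF tf_DeltaPlus[OF f g]] by (auto intro!: bdd_aboveI[of _ 1])
  then show "tf (f x) (g x) t \<le> DD tf f g t"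
    unfolding DD_def by (rule cSUP_upper[OF UNIV_I])
qed

end

lemma DD_least: "(\<And>x. tf (f x) (g x) \<le> H) \<Longrightarrow> DD tf f g \<le> H"
  unfolding DD_def le_fun_def by (auto intro: cSUP_least)

end

locale pm_univ =
  fixes D :: "'a \<Rightarrow> 'a \<Rightarrow> dfun" and tf :: "dfun \<Rightarrow> dfun \<Rightarrow> dfun"
  assumes pm_space: "pm_space UNIV D tf"

sublocale pm_univ \<subseteq> triangle_fun tf
  using pm_space by unfold_locales (simp add: pm_space_def)

context pm_univ
begin

lemma D_DeltaPlus: "D p q \<in> DeltaPlus"
  using pm_space by (simp add: pm_space_def)

lemma D_eq_H0_iff: "D p q = H0 \<longleftrightarrow> p = q"
  using pm_space by (simp add: pm_space_def)

lemma D_self: "D p p = H0"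
  by (simp add: D_eq_H0_iff)

lemma D_commute: "D p q = D q p"
  using pm_space by (simp add: pm_space_def)

lemma D_triangle: "tf (D p q) (D q r) \<le> D p r"
  using pm_space by (simp add: pm_space_def)

lemma LipS_DeltaPlus: "f \<in> LipS D tf \<Longrightarrow> f x \<in> DeltaPlus"
  by (simp add: LipS_def)

lemma LipS_le: "f \<in> LipS D tf \<Longrightarrow> tf (D x y) (f y) \<le> f x"
  by (simp add: LipS_def)

lemma PiG_LipS: "f \<in> PiG D tf \<Longrightarrow> f \<in> LipS D tf"
  by (simp add: PiG_def)

lemma PiG_E:
  assumes "f \<in> PiG D tf"
  obtains b where "pm_cauchy UNIV D b" "\<And>x. wconv sequentially (\<lambda>n. D (b n) x) (f x)"
  using assms by (auto simp: PiG_def)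

lemma pm_delta_LipS: "pm_delta D a \<in> LipS D tf"
  by (simp add: LipS_def pm_delta_def D_DeltaPlus D_triangle)

lemma pm_delta_PiG: "pm_delta D a \<in> PiG D tf"
proof -
  have "pm_cauchy UNIV D (\<lambda>n. a)"
    by (simp add: pm_cauchy_def D_self wconv_def case_prod_unfold)
  moreover have "wconv sequentially (\<lambda>n. D a x) (pm_delta D a x)" for x
    by (simp add: pm_delta_def D_commute wconv_const)
  ultimately show ?thesis
    using pm_delta_LipS unfolding PiG_def by blast
qed

lemma DD_pm_delta:
  assumes f: "f \<in> LipS D tf"
  shows "DD tf f (pm_delta D b) = f b"
proof (rule antisym)
  show "DD tf f (pm_delta D b) \<le> f b"
  proof (rule DD_least)
    fix x
    have "tf (f x) (pm_delta D b x) = tf (D b x) (f x)"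
      by (simp add: pm_delta_def D_commute[of x b] tf_commute LipS_DeltaPlus[OF f] D_DeltaPlus)
    also have "\<dots> \<le> f b"
      by (rule LipS_le[OF f])
    finally show "tf (f x) (pm_delta D b x) \<le> f b" .
  qed
  have "tf (f b) (pm_delta D b b) \<le> DD tf f (pm_delta D b)"
    by (rule DD_upper) (auto simp: LipS_DeltaPlus[OF f] pm_delta_def D_DeltaPlus)
  then show "f b \<le> DD tf f (pm_delta D b)"
    by (simp add: pm_delta_def D_self tf_H0_right LipS_DeltaPlus[OF f])
qed

lemma DD_pm_delta_pm_delta: "DD tf (pm_delta D a) (pm_delta D b) = D a b"
proof -
  have "DD tf (pm_delta D a) (pm_delta D b) = pm_delta D a b"
    by (rule DD_pm_delta[OF pm_delta_LipS])
  then show ?thesis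
    by (simp add: pm_delta_def D_commute[of b a])
qed

lemma DDbar_pm_delta: "DDbar D tf (pm_delta D a) (pm_delta D b) = D a b"
  by (simp add: DDbar_def pm_delta_PiG DD_pm_delta_pm_delta)

lemma inj_pm_delta: "inj (pm_delta D)"
proof (rule injI)
  fix a b assume "pm_delta D a = pm_delta D b"
  then have "D a b = H0"
    by (metis D_self pm_delta_def)
  then show "a = b"
    by (simp add: D_eq_H0_iff)
qed

lemma pm_cauchy_self_limit:
  assumes C: "pm_cauchy UNIV D b" and lim: "\<And>x. wconv sequentially (\<lambda>n. D (b n) x) (g x)"
    and g: "\<And>x. g x \<in> DeltaPlus"
  shows "wconv sequentially (\<lambda>m. g (b m)) H0"
  unfolding wconv_H0_iff[OF g]
proof (intro allI impI)
  fix t a :: real assume t: "t > 0" and a: "a < 1"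
  have "\<forall>t>0. \<forall>a<1. \<exists>N. \<forall>m\<ge>N. \<forall>n\<ge>N. a < D (b n) (b m) (ereal t)"
    using C wconv_prod_H0_iff[of "\<lambda>n p. D (b n) (b p)"] by (simp add: pm_cauchy_def D_DeltaPlus)
  moreover have "t / 2 > 0" "(a + 1) / 2 < 1"
    using t a by simp_all
  ultimately obtain N where N: "\<forall>m\<ge>N. \<forall>n\<ge>N. (a + 1) / 2 < D (b n) (b m) (ereal (t / 2))"
    by blast
  have lb: "(a + 1) / 2 \<le> g (b m) (ereal t)" if "N \<le> m" for m
  proof (rule wconv_lower_bound[OF lim g D_DeltaPlus])
    show "eventually (\<lambda>n. (a + 1) / 2 \<le> D (b n) (b m) (ereal (t / 2))) sequentially"
      using N that by (auto simp: eventually_sequentially intro: less_imp_le)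
  qed (use t in simp)
  show "eventually (\<lambda>m. a < g (b m) (ereal t)) sequentially"
    unfolding eventually_sequentially
  proof (intro exI allI impI)
    fix m assume "N \<le> m"
    have "a < (a + 1) / 2"
      using a by simp
    also have "\<dots> \<le> g (b m) (ereal t)"
      using lb[OF \<open>N \<le> m\<close>] .
    finally show "a < g (b m) (ereal t)" .
  qed
qed

lemma pm_cauchy_pairs:
  assumes "pm_cauchy UNIV D b"
    and "filterlim p sequentially sequentially" "filterlim q sequentially sequentially"
  shows "wconv sequentially (\<lambda>i. D (b (p i)) (b (q i))) H0"
  using wconv_compose[OF _ filterlim_Pair[OF assms(2,3)], of "\<lambda>(n, p). D (b n) (b p)" H0] assms(1)
  by (simp add: pm_cauchy_def)

lemma PiG_near_H0:
  assumes f: "f \<in> PiG D tf" and "t > 0" "a < 1"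
  shows "\<exists>x. a < f x (ereal t)"
proof -
  have fD: "\<And>x. f x \<in> DeltaPlus"
    using LipS_DeltaPlus[OF PiG_LipS[OF f]] .
  obtain b where C: "pm_cauchy UNIV D b" and lim: "\<And>x. wconv sequentially (\<lambda>n. D (b n) x) (f x)"
    using f by (rule PiG_E) blast
  have "wconv sequentially (\<lambda>m. f (b m)) H0"
    by (rule pm_cauchy_self_limit[OF C lim fD])
  then have "eventually (\<lambda>m. a < f (b m) (ereal t)) sequentially"
    using assms(2,3) unfolding wconv_H0_iff[OF fD] by blast
  then obtain N where "\<forall>m\<ge>N. a < f (b m) (ereal t)"
    unfolding eventually_sequentially by blast
  then show ?thesis
    by blast
qed

end

locale continuous_pm_univ = pm_univ +
  assumes tf_continuous: "tf_continuous tf"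
begin

lemma wconv_tf:
  assumes "\<And>n. Fs n \<in> DeltaPlus" "\<And>n. Ls n \<in> DeltaPlus" "F \<in> DeltaPlus" "L \<in> DeltaPlus"
    "wconv sequentially Fs F" "wconv sequentially Ls L"
  shows "wconv sequentially (\<lambda>n. tf (Fs n) (Ls n)) (tf F L)"
  using tf_continuous assms unfolding tf_continuous_def by blast

lemma pointwise_limit_LipS:
  assumes lim: "\<And>x. wconv sequentially (\<lambda>n. D (b n) x) (g x)" and g: "\<And>x. g x \<in> DeltaPlus"
  shows "g \<in> LipS D tf"
  unfolding LipS_def
proof (intro CollectI conjI allI g)
  fix x y
  show "tf (D x y) (g y) \<le> g x"
  proof (rule wconv_le[OF _ lim tf_DeltaPlus[OF D_DeltaPlus g] g])
    show "wconv sequentially (\<lambda>n. tf (D x y) (D (b n) y)) (tf (D x y) (g y))"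
      by (rule wconv_tf[OF D_DeltaPlus D_DeltaPlus D_DeltaPlus g wconv_const lim])
    have "tf (D x y) (D (b n) y) \<le> D (b n) x" for n
      using D_triangle[of "b n" y x] by (simp add: tf_commute[OF D_DeltaPlus D_DeltaPlus] D_commute[of x y])
    then show "eventually (\<lambda>n. tf (D x y) (D (b n) y) \<le> D (b n) x) sequentially"
      by simp
  qed
qed

lemma DD_eq_limit:
  assumes f: "f \<in> LipS D tf" and C: "pm_cauchy UNIV D b"
    and lim: "\<And>x. wconv sequentially (\<lambda>n. D (b n) x) (g x)" and g: "\<And>x. g x \<in> DeltaPlus"
    and r: "filterlim r sequentially sequentially" and F: "F \<in> DeltaPlus"
    and conv: "wconv sequentially (\<lambda>i. f (b (r i))) F"
  shows "DD tf f g = F"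
proof (rule antisym)
  have fD: "\<And>x. f x \<in> DeltaPlus"
    using LipS_DeltaPlus[OF f] .
  show "DD tf f g \<le> F"
  proof (rule DD_least)
    fix x
    show "tf (f x) (g x) \<le> F"
    proof (rule wconv_le[OF _ conv tf_DeltaPlus[OF fD g] F])
      show "wconv sequentially (\<lambda>i. tf (f x) (D (b (r i)) x)) (tf (f x) (g x))"
        by (rule wconv_tf) (auto simp: fD D_DeltaPlus g wconv_const intro: wconv_compose[OF lim r])
      show "eventually (\<lambda>i. tf (f x) (D (b (r i)) x) \<le> f (b (r i))) sequentially"
        by (simp add: tf_commute[OF fD D_DeltaPlus] LipS_le[OF f])
    qed
  qed
  show "F \<le> DD tf f g"
  proof (rule wconv_le[OF _ wconv_const _ DD_DeltaPlus[OF fD g]])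
    have "wconv sequentially (\<lambda>i. g (b (r i))) H0"
      using wconv_compose[OF pm_cauchy_self_limit[OF C lim g] r] .
    from wconv_tf[OF fD g F H0_DeltaPlus conv this]
    show "wconv sequentially (\<lambda>i. tf (f (b (r i))) (g (b (r i)))) F"
      by (simp add: tf_H0_right F)
    show "eventually (\<lambda>i. tf (f (b (r i))) (g (b (r i))) \<le> DD tf f g) sequentially"
      by (simp add: DD_upper fD g)
  qed (simp add: tf_DeltaPlus fD g F)
qed

lemma DD_subsubsequence:
  assumes f: "f \<in> LipS D tf" and C: "pm_cauchy UNIV D b"
    and lim: "\<And>x. wconv sequentially (\<lambda>n. D (b n) x) (g x)" and g: "\<And>x. g x \<in> DeltaPlus"
    and r: "strict_mono (r :: nat \<Rightarrow> nat)"
  shows "\<exists>r' :: nat \<Rightarrow> nat. strict_mono r' \<and> wconv sequentially (\<lambda>i. f (b (r (r' i)))) (DD tf f g)"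
proof -
  obtain r' L where r': "strict_mono (r' :: nat \<Rightarrow> nat)" and L: "L \<in> DeltaPlus"
    and conv: "wconv sequentially (\<lambda>i. f (b (r (r' i)))) L"
    using Helly_selection_DeltaPlus[of "\<lambda>i. f (b (r i))"] LipS_DeltaPlus[OF f] by blast
  have "strict_mono (\<lambda>i. r (r' i))"
    using r r' by (simp add: strict_mono_def)
  then have "DD tf f g = L"
    using DD_eq_limit[OF f C lim g filterlim_subseq L conv] by blast
  then show ?thesis
    using r' conv by blast
qed

lemma DD_self:
  assumes "g \<in> PiG D tf"
  shows "DD tf g g = H0"
proof -
  obtain b where C: "pm_cauchy UNIV D b" and lim: "\<And>x. wconv sequentially (\<lambda>n. D (b n) x) (g x)"
    using assms by (rule PiG_E) blast
  have g: "\<And>x. g x \<in> DeltaPlus"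
    using LipS_DeltaPlus[OF PiG_LipS[OF assms]] .
  show ?thesis
    using DD_eq_limit[OF PiG_LipS[OF assms] C lim g filterlim_ident H0_DeltaPlus]
      pm_cauchy_self_limit[OF C lim g] by simp
qed

lemma DD_eq_H0_imp_le:
  assumes f: "f \<in> LipS D tf" and g: "g \<in> PiG D tf" and H: "DD tf f g = H0"
  shows "g x \<le> f x"
proof -
  obtain b where C: "pm_cauchy UNIV D b" and lim: "\<And>x. wconv sequentially (\<lambda>n. D (b n) x) (g x)"
    using g by (rule PiG_E) blast
  have fD: "\<And>x. f x \<in> DeltaPlus" and gD: "\<And>x. g x \<in> DeltaPlus"
    using LipS_DeltaPlus[OF f] LipS_DeltaPlus[OF PiG_LipS[OF g]] by auto
  obtain r :: "nat \<Rightarrow> nat" where r: "strict_mono r" and conv: "wconv sequentially (\<lambda>i. f (b (r i))) H0"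
    using DD_subsubsequence[OF f C lim gD strict_mono_id] H by auto
  show ?thesis
  proof (rule wconv_le[OF _ wconv_const gD fD])
    have "wconv sequentially (\<lambda>i. tf (D x (b (r i))) (f (b (r i)))) (tf (g x) H0)"
      by (rule wconv_tf) (auto simp: D_DeltaPlus gD fD H0_DeltaPlus conv D_commute[of x]
          intro: wconv_compose[OF lim filterlim_subseq[OF r]])
    then show "wconv sequentially (\<lambda>i. tf (D x (b (r i))) (f (b (r i)))) (g x)"
      by (simp add: tf_H0_right gD)
    show "eventually (\<lambda>i. tf (D x (b (r i))) (f (b (r i))) \<le> f x) sequentially"
      by (simp add: LipS_le[OF f])
  qed
qed

lemma DD_eq_H0_iff:
  assumes f: "f \<in> PiG D tf" and g: "g \<in> PiG D tf"
  shows "DD tf f g = H0 \<longleftrightarrow> f = g"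
proof
  have fD: "\<And>x. f x \<in> DeltaPlus" and gD: "\<And>x. g x \<in> DeltaPlus"
    using LipS_DeltaPlus[OF PiG_LipS[OF f]] LipS_DeltaPlus[OF PiG_LipS[OF g]] by auto
  assume H: "DD tf f g = H0"
  then have "DD tf g f = H0"
    by (simp add: DD_commute[OF fD gD])
  with H show "f = g"
    using DD_eq_H0_imp_le[OF PiG_LipS[OF f] g] DD_eq_H0_imp_le[OF PiG_LipS[OF g] f]
    by (blast intro: ext antisym)
qed (simp add: DD_self g)

lemma DD_triangle:
  assumes f: "f \<in> LipS D tf" and g: "g \<in> PiG D tf" and h: "h \<in> LipS D tf"
  shows "tf (DD tf f g) (DD tf g h) \<le> DD tf f h"
proof -
  obtain b where C: "pm_cauchy UNIV D b" and lim: "\<And>x. wconv sequentially (\<lambda>n. D (b n) x) (g x)"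
    using g by (rule PiG_E) blast
  have fD: "\<And>x. f x \<in> DeltaPlus" and gD: "\<And>x. g x \<in> DeltaPlus" and hD: "\<And>x. h x \<in> DeltaPlus"
    using LipS_DeltaPlus[OF f] LipS_DeltaPlus[OF PiG_LipS[OF g]] LipS_DeltaPlus[OF h] by auto
  obtain r1 :: "nat \<Rightarrow> nat" where r1: "strict_mono r1"
    and c1: "wconv sequentially (\<lambda>i. f (b (r1 i))) (DD tf f g)"
    using DD_subsubsequence[OF f C lim gD strict_mono_id] by auto
  obtain r2 :: "nat \<Rightarrow> nat" where r2: "strict_mono r2"
    and c2: "wconv sequentially (\<lambda>i. h (b (r1 (r2 i)))) (DD tf h g)"
    using DD_subsubsequence[OF h C lim gD r1] by blast
  have "wconv sequentially (\<lambda>i. tf (f (b (r1 (r2 i)))) (h (b (r1 (r2 i)))))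
      (tf (DD tf f g) (DD tf h g))"
    by (rule wconv_tf[OF fD hD DD_DeltaPlus[OF fD gD] DD_DeltaPlus[OF hD gD]
          wconv_compose[OF c1 filterlim_subseq[OF r2]] c2])
  then have conv: "wconv sequentially (\<lambda>i. tf (f (b (r1 (r2 i)))) (h (b (r1 (r2 i)))))
      (tf (DD tf f g) (DD tf g h))"
    by (simp add: DD_commute[OF hD gD])
  show ?thesis
  proof (rule wconv_le[OF conv wconv_const _ DD_DeltaPlus[OF fD hD]])
    show "tf (DD tf f g) (DD tf g h) \<in> DeltaPlus"
      by (intro tf_DeltaPlus DD_DeltaPlus fD gD hD)
    show "eventually (\<lambda>i. tf (f (b (r1 (r2 i)))) (h (b (r1 (r2 i)))) \<le> DD tf f h) sequentially"
      by (simp add: DD_upper fD hD)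
  qed
qed

lemma pm_cauchy_pointwise_wconv:
  assumes C: "pm_cauchy UNIV D b"
  shows "\<exists>G \<in> DeltaPlus. wconv sequentially (\<lambda>n. D (b n) x) G"
proof -
  have le: "G1 \<le> G2"
    if G1: "G1 \<in> DeltaPlus" "wconv sequentially (\<lambda>i. D (b (p i)) x) G1"
      and G2: "G2 \<in> DeltaPlus" "wconv sequentially (\<lambda>i. D (b (q i)) x) G2"
      and p: "filterlim p sequentially sequentially" and q: "filterlim q sequentially sequentially"
    for G1 G2 p q
  proof (rule wconv_le[OF _ G2(2) G1(1) G2(1)])
    from wconv_tf[OF D_DeltaPlus D_DeltaPlus H0_DeltaPlus G1(1) pm_cauchy_pairs[OF C q p] G1(2)]
    show "wconv sequentially (\<lambda>i. tf (D (b (q i)) (b (p i))) (D (b (p i)) x)) G1"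
      by (simp add: tf_H0_left G1(1))
    show "eventually (\<lambda>i. tf (D (b (q i)) (b (p i))) (D (b (p i)) x) \<le> D (b (q i)) x) sequentially"
      by (simp add: D_triangle)
  qed
  obtain r0 :: "nat \<Rightarrow> nat" and G where r0: "strict_mono r0" and G: "G \<in> DeltaPlus"
    and c0: "wconv sequentially (\<lambda>i. D (b (r0 i)) x) G"
    using Helly_selection_DeltaPlus[of "\<lambda>n. D (b n) x"] D_DeltaPlus by blast
  have "wconv sequentially (\<lambda>n. D (b n) x) G"
  proof (rule wconv_by_subsubsequences)
    fix r :: "nat \<Rightarrow> nat" assume r: "strict_mono r"
    obtain r' :: "nat \<Rightarrow> nat" and G' where r': "strict_mono r'" and G': "G' \<in> DeltaPlus"
      and c: "wconv sequentially (\<lambda>i. D (b (r (r' i))) x) G'"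
      using Helly_selection_DeltaPlus[of "\<lambda>i. D (b (r i)) x"] D_DeltaPlus by blast
    have "strict_mono (\<lambda>i. r (r' i))"
      using r r' by (simp add: strict_mono_def)
    then have "G' = G"
      using le[OF G' c G c0] le[OF G c0 G' c] filterlim_subseq[OF r0] filterlim_subseq
      by (blast intro: antisym)
    with r' c show "\<exists>r'. strict_mono r' \<and> wconv sequentially (\<lambda>i. D (b (r (r' i))) x) G"
      by blast
  qed
  with G show ?thesis
    by blast
qed

lemma pm_cauchy_PiG_limit:
  assumes C: "pm_cauchy UNIV D b"
  shows "\<exists>g \<in> PiG D tf. \<forall>x. wconv sequentially (\<lambda>n. D (b n) x) (g x)"
proof -
  obtain g where g: "\<And>x. g x \<in> DeltaPlus" and lim: "\<And>x. wconv sequentially (\<lambda>n. D (b n) x) (g x)"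
    using pm_cauchy_pointwise_wconv[OF C] by metis
  have "g \<in> PiG D tf"
    unfolding PiG_def using pointwise_limit_LipS[OF lim g] C lim by blast
  with lim show ?thesis
    by blast
qed

lemma DDbar_DeltaPlus: "f \<in> LipS D tf \<Longrightarrow> g \<in> LipS D tf \<Longrightarrow> DDbar D tf f g \<in> DeltaPlus"
  by (simp add: DDbar_def DD_DeltaPlus LipS_DeltaPlus H0_DeltaPlus Hinf_DeltaPlus)

lemma DDbar_commute: "f \<in> LipS D tf \<Longrightarrow> g \<in> LipS D tf \<Longrightarrow> DDbar D tf f g = DDbar D tf g f"
  by (auto simp: DDbar_def DD_commute LipS_DeltaPlus)

lemma DDbar_self: "DDbar D tf f f = H0"
  by (simp add: DDbar_def DD_self)

lemma DDbar_eq_H0_iff: "DDbar D tf f g = H0 \<longleftrightarrow> f = g"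
  using H0_neq_Hinf by (auto simp: DDbar_def DD_eq_H0_iff DD_self)

lemma DDbar_triangle:
  assumes f: "f \<in> LipS D tf" and g: "g \<in> LipS D tf" and h: "h \<in> LipS D tf"
  shows "tf (DDbar D tf f g) (DDbar D tf g h) \<le> DDbar D tf f h"
proof -
  have fg: "DDbar D tf f g \<in> DeltaPlus" and gh: "DDbar D tf g h \<in> DeltaPlus"
    and fh: "DDbar D tf f h \<in> DeltaPlus"
    using DDbar_DeltaPlus f g h by auto
  consider "f \<in> PiG D tf" "g \<in> PiG D tf" "h \<in> PiG D tf" | "f = g" | "g = h"
    | "DDbar D tf f g = Hinf" | "DDbar D tf g h = Hinf"
    unfolding DDbar_def by metis
  then show ?thesis
  proof cases
    case 1
    then show ?thesis
      using DD_triangle[OF f _ h, of g] by (simp add: DDbar_def)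
  next
    case 2
    then show ?thesis
      by (simp add: DDbar_self tf_H0_left gh)
  next
    case 3
    then show ?thesis
      by (simp add: DDbar_self tf_H0_right fh)
  next
    case 4
    then show ?thesis
      by (simp add: tf_Hinf_left gh Hinf_le_DeltaPlus fh)
  next
    case 5
    then show ?thesis
      by (simp add: tf_Hinf_right fg Hinf_le_DeltaPlus fh)
  qed
qed

lemma pm_space_LipS: "pm_space (LipS D tf) (DDbar D tf) tf"
  unfolding pm_space_def
proof (intro conjI ballI triangle_function)
  fix f g h assume f: "f \<in> LipS D tf" and g: "g \<in> LipS D tf" and h: "h \<in> LipS D tf"
  show "tf (DDbar D tf f g) (DDbar D tf g h) \<le> DDbar D tf f h"
    by (rule DDbar_triangle[OF f g h])
next
  fix f g assume f: "f \<in> LipS D tf" and g: "g \<in> LipS D tf"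
  show "DDbar D tf f g \<in> DeltaPlus"
    by (rule DDbar_DeltaPlus[OF f g])
  show "DDbar D tf f g = DDbar D tf g f"
    by (rule DDbar_commute[OF f g])
  show "DDbar D tf f g = H0 \<longleftrightarrow> f = g"
    by (rule DDbar_eq_H0_iff)
qed

section \<open>Completeness\<close>

lemma D_ge_through_PiG:
  assumes f: "f \<in> PiG D tf" and g: "g \<in> PiG D tf"
  shows "tf (f a) (tf (DD tf f g) (g c)) \<le> D a c"
proof -
  have fD: "\<And>x. f x \<in> DeltaPlus" and gD: "\<And>x. g x \<in> DeltaPlus"
    using LipS_DeltaPlus[OF PiG_LipS[OF f]] LipS_DeltaPlus[OF PiG_LipS[OF g]] by auto
  have dD: "\<And>e x. pm_delta D e x \<in> DeltaPlus"
    by (simp add: pm_delta_def D_DeltaPlus)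
  have fa: "DD tf (pm_delta D a) f = f a"
    using DD_commute[of "pm_delta D a" f, OF dD fD] DD_pm_delta[OF PiG_LipS[OF f]] by simp
  have "tf (DD tf f g) (g c) = tf (DD tf f g) (DD tf g (pm_delta D c))"
    by (simp add: DD_pm_delta[OF PiG_LipS[OF g]])
  also have "\<dots> \<le> DD tf f (pm_delta D c)"
    by (rule DD_triangle[OF PiG_LipS[OF f] g pm_delta_LipS])
  finally have "tf (f a) (tf (DD tf f g) (g c)) \<le> tf (f a) (DD tf f (pm_delta D c))"
    by (intro tf_mono_right tf_DeltaPlus DD_DeltaPlus fD gD dD)
  also have "\<dots> = tf (DD tf (pm_delta D a) f) (DD tf f (pm_delta D c))"
    by (simp only: fa)
  also have "\<dots> \<le> DD tf (pm_delta D a) (pm_delta D c)"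
    by (rule DD_triangle[OF pm_delta_LipS f pm_delta_LipS])
  finally show ?thesis
    by (simp add: DD_pm_delta_pm_delta)
qed

lemma pm_cauchy_of_approximate_points:
  assumes fP: "\<And>n. f n \<in> PiG D tf"
    and Cf: "wconv (sequentially \<times>\<^sub>F sequentially) (\<lambda>(n, p). DD tf (f n) (f p)) H0"
    and E: "wconv sequentially (\<lambda>n. f n (b n)) H0"
  shows "pm_cauchy UNIV D b"
  unfolding pm_cauchy_def
proof (intro conjI allI UNIV_I wconv_prod_sequentially_H0)
  have fD: "\<And>n x. f n x \<in> DeltaPlus"
    using LipS_DeltaPlus[OF PiG_LipS[OF fP]] .
  have DDD: "\<And>n p. DD tf (f n) (f p) \<in> DeltaPlus"
    by (intro DD_DeltaPlus fD)
  show "(\<lambda>(n, p). D (b n) (b p)) x \<in> DeltaPlus" for x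
    by (simp add: case_prod_beta D_DeltaPlus)
  fix p q :: "nat \<Rightarrow> nat"
  assume p: "filterlim p sequentially sequentially" and q: "filterlim q sequentially sequentially"
  have "wconv sequentially (\<lambda>i. DD tf (f (p i)) (f (q i))) H0"
    using wconv_compose[OF Cf filterlim_Pair[OF p q]] by simp
  from wconv_tf[OF DDD fD H0_DeltaPlus H0_DeltaPlus this wconv_compose[OF E q]]
  have "wconv sequentially (\<lambda>i. tf (DD tf (f (p i)) (f (q i))) (f (q i) (b (q i)))) H0"
    by (simp add: tf_H0_right H0_DeltaPlus)
  from wconv_tf[OF fD tf_DeltaPlus[OF DDD fD] H0_DeltaPlus H0_DeltaPlus wconv_compose[OF E p] this]
  have "wconv sequentially
      (\<lambda>i. tf (f (p i) (b (p i))) (tf (DD tf (f (p i)) (f (q i))) (f (q i) (b (q i))))) H0"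
    by (simp add: tf_H0_right H0_DeltaPlus)
  then have "wconv sequentially (\<lambda>i. D (b (p i)) (b (q i))) H0"
    by (rule wconv_H0_squeeze[OF _ D_ge_through_PiG[OF fP fP]]) (intro tf_DeltaPlus DDD fD D_DeltaPlus)+
  then show "wconv sequentially (\<lambda>i. (\<lambda>(n, p). D (b n) (b p)) (p i, q i)) H0"
    by simp
qed

lemma PiG_complete:
  assumes fP: "\<And>n. f n \<in> PiG D tf"
    and Cf: "wconv (sequentially \<times>\<^sub>F sequentially) (\<lambda>(n, p). DD tf (f n) (f p)) H0"
  shows "\<exists>g \<in> PiG D tf. wconv sequentially (\<lambda>n. DD tf (f n) g) H0"
proof -
  have fD: "\<And>n x. f n x \<in> DeltaPlus"
    using LipS_DeltaPlus[OF PiG_LipS[OF fP]] .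
  have "\<exists>x. 1 - inverse (real (Suc n)) < f n x (ereal (inverse (real (Suc n))))" for n
    by (rule PiG_near_H0[OF fP]) simp_all
  then obtain b where "\<And>n. 1 - inverse (real (Suc n)) < f n (b n) (ereal (inverse (real (Suc n))))"
    by metis
  from wconv_H0_diagonal[OF fD LIMSEQ_inverse_real_of_nat this]
  have E: "wconv sequentially (\<lambda>n. f n (b n)) H0" .
  obtain g where g: "g \<in> PiG D tf" and lim: "\<And>x. wconv sequentially (\<lambda>n. D (b n) x) (g x)"
    using pm_cauchy_PiG_limit[OF pm_cauchy_of_approximate_points[OF fP Cf E]] by blast
  have gD: "\<And>x. g x \<in> DeltaPlus"
    using LipS_DeltaPlus[OF PiG_LipS[OF g]] .
  have "wconv sequentially (\<lambda>n. tf (f n (b n)) (g (b n))) (tf H0 H0)"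
    using wconv_tf[OF fD gD H0_DeltaPlus H0_DeltaPlus E
        pm_cauchy_self_limit[OF pm_cauchy_of_approximate_points[OF fP Cf E] lim gD]] .
  then have "wconv sequentially (\<lambda>n. tf (f n (b n)) (g (b n))) H0"
    by (simp add: tf_H0_right H0_DeltaPlus)
  then have "wconv sequentially (\<lambda>n. DD tf (f n) g) H0"
    by (rule wconv_H0_squeeze[OF _ DD_upper[OF fD gD]]) (intro tf_DeltaPlus DD_DeltaPlus fD gD)+
  with g show ?thesis
    by blast
qed

text \<open>Distinct maps not both in \<open>PiG\<close> are at distance \<open>Hinf\<close>, so a Cauchy
  sequence for \<open>DDbar\<close> is eventually constant or eventually inside \<open>PiG\<close>.\<close>

lemma DDbar_cauchy_tail:
  assumes "\<forall>t>0. \<forall>a<1. \<exists>N. \<forall>m\<ge>N. \<forall>n\<ge>N. a < DDbar D tf (z n) (z m) (ereal t)"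
  obtains N where "\<And>m n. N \<le> m \<Longrightarrow> N \<le> n \<Longrightarrow> (z n \<in> PiG D tf \<and> z m \<in> PiG D tf) \<or> z n = z m"
proof -
  obtain N where N: "\<forall>m\<ge>N. \<forall>n\<ge>N. 0 < DDbar D tf (z n) (z m) (ereal 1)"
    using assms by (meson zero_less_one)
  have "(z n \<in> PiG D tf \<and> z m \<in> PiG D tf) \<or> z n = z m" if "N \<le> m" "N \<le> n" for m n
  proof (rule ccontr)
    assume "\<not> ?thesis"
    then have "DDbar D tf (z n) (z m) = Hinf"
      by (auto simp: DDbar_def)
    with N[rule_format, OF that] show False
      by (simp add: Hinf_def)
  qed
  then show ?thesis
    using that by blast
qed

lemma DDbar_cauchy_PiG_tail_converges:
  assumes zP: "\<And>n. N \<le> n \<Longrightarrow> z n \<in> PiG D tf"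
    and W: "\<forall>t>0. \<forall>a<1. \<exists>M. \<forall>m\<ge>M. \<forall>n\<ge>M. a < DDbar D tf (z n) (z m) (ereal t)"
  shows "\<exists>g \<in> PiG D tf. wconv sequentially (\<lambda>n. DDbar D tf (z n) g) H0"
proof -
  define f where "f n = z (max n N)" for n
  have fP: "\<And>n. f n \<in> PiG D tf"
    using zP by (simp add: f_def)
  have "wconv (sequentially \<times>\<^sub>F sequentially) (\<lambda>(n, p). DD tf (f n) (f p)) H0"
    unfolding wconv_prod_H0_iff[OF DD_DeltaPlus[OF LipS_DeltaPlus LipS_DeltaPlus, OF PiG_LipS PiG_LipS,
          OF fP fP]]
  proof (intro allI impI)
    fix t a :: real assume "t > 0" "a < 1"
    with W obtain M where M: "\<forall>m\<ge>M. \<forall>n\<ge>M. a < DDbar D tf (z n) (z m) (ereal t)"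
      by blast
    have "a < DD tf (f n) (f m) (ereal t)" if "M \<le> m" "M \<le> n" for m n
      using M[rule_format, of "max m N" "max n N"] that fP[of n] fP[of m]
      by (simp add: f_def DDbar_def)
    then show "\<exists>M. \<forall>m\<ge>M. \<forall>n\<ge>M. a < DD tf (f n) (f m) (ereal t)"
      by blast
  qed
  then obtain g where g: "g \<in> PiG D tf" and lim: "wconv sequentially (\<lambda>n. DD tf (f n) g) H0"
    using PiG_complete[of f, OF fP] by blast
  have "DD tf (f n) g = DDbar D tf (z n) g" if "N \<le> n" for n
    using fP[of n] g by (simp add: f_def DDbar_def max_absorb1[OF that])
  then have "eventually (\<lambda>n. DD tf (f n) g = DDbar D tf (z n) g) sequentially"
    unfolding eventually_sequentially by blast
  from wconv_cong[OF this] lim g show ?thesis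
    by blast
qed

lemma pm_complete_LipS: "pm_complete (LipS D tf) (DDbar D tf)"
  unfolding pm_complete_def
proof (intro allI impI)
  fix z assume Cz: "pm_cauchy (LipS D tf) (DDbar D tf) z"
  have zL: "\<And>n. z n \<in> LipS D tf"
    using Cz by (simp add: pm_cauchy_def)
  have W: "\<forall>t>0. \<forall>a<1. \<exists>N. \<forall>m\<ge>N. \<forall>n\<ge>N. a < DDbar D tf (z n) (z m) (ereal t)"
    using Cz wconv_prod_H0_iff[of "\<lambda>n p. DDbar D tf (z n) (z p)"]
    by (simp add: pm_cauchy_def DDbar_DeltaPlus zL)
  then obtain N where tail: "\<And>m n. N \<le> m \<Longrightarrow> N \<le> n \<Longrightarrow> (z n \<in> PiG D tf \<and> z m \<in> PiG D tf) \<or> z n = z m"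
    by (rule DDbar_cauchy_tail) blast
  show "\<exists>g \<in> LipS D tf. wconv sequentially (\<lambda>n. DDbar D tf (z n) g) H0"
  proof (cases "\<exists>n\<ge>N. z n \<notin> PiG D tf")
    case True
    then obtain n0 where n0: "N \<le> n0" "z n0 \<notin> PiG D tf"
      by blast
    have "H0 = DDbar D tf (z n) (z n0)" if "N \<le> n" for n
      using tail[OF n0(1) that] n0(2) by (auto simp: DDbar_self)
    then have "eventually (\<lambda>n. H0 = DDbar D tf (z n) (z n0)) sequentially"
      unfolding eventually_sequentially by blast
    from wconv_cong[OF this] have "wconv sequentially (\<lambda>n. DDbar D tf (z n) (z n0)) H0"
      using wconv_const[of sequentially H0] by blast
    with zL show ?thesis
      by blast
  next
    case False
    then show ?thesis
      using DDbar_cauchy_PiG_tail_converges[OF _ W] PiG_LipS by blast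
  qed
qed

end

section \<open>Invariant probabilistic metric groups\<close>

context pm_univ
begin

lemma invariant_pm_group_mult_le:
  assumes "invariant_pm_group Gr D"
  shows "tf (D y a) (D z b) \<le> D (y \<otimes>\<^bsub>Gr\<^esub> z) (a \<otimes>\<^bsub>Gr\<^esub> b)"
  using D_triangle[of "y \<otimes>\<^bsub>Gr\<^esub> z" "a \<otimes>\<^bsub>Gr\<^esub> z" "a \<otimes>\<^bsub>Gr\<^esub> b"] assms
  by (simp add: invariant_pm_group_def)

lemma pm_delta_mult:
  fixes Gr (structure)
  assumes G: "group Gr" and U: "carrier Gr = UNIV" and inv: "invariant_pm_group Gr D"
  shows "pm_delta D (a \<otimes> b) = odot Gr tf (pm_delta D a) (pm_delta D b)"
proof (intro ext)
  fix x t
  interpret group Gr by (rule G)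
  have x: "(x \<otimes> inv b) \<otimes> b = x"
    using U by (simp add: m_assoc)
  have "tf (D (x \<otimes> inv b) a) (D b b) = D ((x \<otimes> inv b) \<otimes> b) (a \<otimes> b)"
    using inv by (simp add: invariant_pm_group_def D_self tf_H0_right D_DeltaPlus)
  then have max: "tf (D (x \<otimes> inv b) a) (D b b) = D x (a \<otimes> b)"
    by (simp only: x)
  have "(SUP yz\<in>{(y, z). y \<otimes> z = x}. tf (D (fst yz) a) (D (snd yz) b) t) = D x (a \<otimes> b) t"
  proof (rule cSup_eq_maximum)
    show "D x (a \<otimes> b) t \<in> (\<lambda>yz. tf (D (fst yz) a) (D (snd yz) b) t) ` {(y, z). y \<otimes> z = x}"
      using max x by (auto intro!: image_eqI[of _ _ "(x \<otimes> inv b, b)"])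
    show "w \<le> D x (a \<otimes> b) t"
      if "w \<in> (\<lambda>yz. tf (D (fst yz) a) (D (snd yz) b) t) ` {(y, z). y \<otimes> z = x}" for w
      using that invariant_pm_group_mult_le[OF inv] by (auto simp: le_fun_def)
  qed
  then show "pm_delta D (a \<otimes> b) x t = odot Gr tf (pm_delta D a) (pm_delta D b) x t"
    by (simp add: odot_def pm_delta_def)
qed

end

theorem mainTheorem14:
  fixes D :: "'a \<Rightarrow> 'a \<Rightarrow> dfun" and tf :: "dfun \<Rightarrow> dfun \<Rightarrow> dfun"
    and Gr :: "('a, 'b) monoid_scheme"
  assumes "pm_space UNIV D tf" and "tf_continuous tf"
  shows "(pm_space (LipS D tf) (DDbar D tf) tf \<and> pm_complete (LipS D tf) (DDbar D tf)
          \<and> (\<forall>a. pm_delta D a \<in> LipS D tf) \<and> inj (pm_delta D)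
          \<and> (\<forall>a b. DDbar D tf (pm_delta D a) (pm_delta D b) = D a b))
       \<and> (group Gr \<and> carrier Gr = UNIV \<and> invariant_pm_group Gr D \<and> tf_sup_continuous tf
          \<longrightarrow> (\<forall>a b. pm_delta D (a \<otimes>\<^bsub>Gr\<^esub> b) = odot Gr tf (pm_delta D a) (pm_delta D b)))"
proof -
  interpret continuous_pm_univ D tf
    using assms by unfold_locales
  show ?thesis
    using pm_space_LipS pm_complete_LipS pm_delta_LipS inj_pm_delta DDbar_pm_delta
    by (auto intro: pm_delta_mult)
qed

end
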